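(* Let $p>5$ be a prime and $k$ a positive integer with $k<p/4$. Set $D=\left\lceil \frac{2kp}{p-3}\right\rceil$. Then $D<p$, and for any $D$-APs $A_1,\dots,A_k\subseteq\mathbb{Z}_p$ we have $\big|\sum_{i=1}^k A_i\big| \le \frac{p-1}{2}$.
   Context: $\mathbb{Z}_p=\{0,\dots,p-1\}$ under addition mod $p$. Sumset: $\sum_{i=1}^k A_i=\{a_1+\dots+a_k\bmod p : a_i\in A_i\}$. For an integer $1\le D\le p-1$ and $b\in\{0,\dots,D-1\}$, the $D$-AP with base $b$ is $A_{(b)}=\{b+iD : i\text{ integer},\ 0\le i\le\lfloor (p-1-b)/D\rfloor\}\subseteq\mathbb{Z}_p$; a $D$-AP is any set of this form. *)

theory Defs
  imports Complex_Main "HOL-Computational_Algebra.Primes"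
begin

text \<open>Z_p is modelled as {0..p-1} of naturals with addition mod p.\<close>

definition D_AP :: "nat \<Rightarrow> nat \<Rightarrow> nat \<Rightarrow> nat set" where
  "D_AP p D b = {b + i * D | i. i \<le> (p - 1 - b) div D}"

definition is_D_AP :: "nat \<Rightarrow> nat \<Rightarrow> nat set \<Rightarrow> bool" where
  "is_D_AP p D A \<longleftrightarrow> (\<exists>b<D. A = D_AP p D b)"

definition sumset_mod :: "nat \<Rightarrow> nat \<Rightarrow> (nat \<Rightarrow> nat set) \<Rightarrow> nat set" where
  "sumset_mod p k A = {(\<Sum>i=1..k. a i) mod p | a. \<forall>i\<in>{1..k}. a i \<in> A i}"

end

theory Submission
  imports Defs
begin

text \<open>Every \<open>D\<close>-AP in \<open>{0..p-1}\<close> is contained in \<open>b + D\<cdot>{0..M}\<close> with \<open>M = (p-1) div D\<close>, so a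
  sum of \<open>k\<close> of them is contained in the image of \<open>B + D\<cdot>{0..kM}\<close> and has at most \<open>kM + 1\<close>
  elements. The choice of \<open>D\<close> gives \<open>2kp \<le> D(p-3)\<close>, hence \<open>2kMp \<le> MD(p-3) \<le> (p-1)(p-3)\<close>,
  i.e. \<open>2kM < p - 3\<close>, which is the required bound.\<close>

lemma D_AP_subset: "D_AP p D b \<subseteq> {b + j * D | j. j \<le> (p - 1) div D}"
  unfolding D_AP_def using div_le_mono[of "p - 1 - b" "p - 1" D] by force

lemma sumset_mod_subset_progression:
  assumes "\<And>i. i \<in> {1..k} \<Longrightarrow> A i \<subseteq> {b i + j * D | j. j \<le> M}"
  shows "sumset_mod p k A \<subseteq> (\<lambda>J. ((\<Sum>i=1..k. b i) + J * D) mod p) ` {0..k * M}"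
proof
  fix x assume "x \<in> sumset_mod p k A"
  then obtain a where x: "x = (\<Sum>i=1..k. a i) mod p" and a: "\<forall>i\<in>{1..k}. a i \<in> A i"
    unfolding sumset_mod_def by blast
  have "\<forall>i\<in>{1..k}. \<exists>j. j \<le> M \<and> a i = b i + j * D"
    using a assms by blast
  then obtain j where j: "\<And>i. i \<in> {1..k} \<Longrightarrow> j i \<le> M \<and> a i = b i + j i * D"
    by metis
  have "(\<Sum>i=1..k. a i) = (\<Sum>i=1..k. b i + j i * D)"
    using j by (intro sum.cong) auto
  also have "\<dots> = (\<Sum>i=1..k. b i) + (\<Sum>i=1..k. j i) * D"
    by (simp add: sum.distrib sum_distrib_right)
  finally have "x = ((\<Sum>i=1..k. b i) + (\<Sum>i=1..k. j i) * D) mod p"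
    using x by simp
  moreover have "(\<Sum>i=1..k. j i) \<le> k * M"
    using sum_mono[of "{1..k}" j "\<lambda>_. M"] j by simp
  ultimately show "x \<in> (\<lambda>J. ((\<Sum>i=1..k. b i) + J * D) mod p) ` {0..k * M}"
    by auto
qed

lemma card_sumset_mod_D_AP_le:
  assumes "\<forall>i\<in>{1..k}. is_D_AP p D (A i)"
  shows "card (sumset_mod p k A) \<le> k * ((p - 1) div D) + 1"
proof -
  obtain b where "\<And>i. i \<in> {1..k} \<Longrightarrow> A i = D_AP p D (b i)"
    using assms unfolding is_D_AP_def by metis
  then have "sumset_mod p k A
      \<subseteq> (\<lambda>J. ((\<Sum>i=1..k. b i) + J * D) mod p) ` {0..k * ((p - 1) div D)}"
    using D_AP_subset by (intro sumset_mod_subset_progression) blast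
  then have "card (sumset_mod p k A) \<le> card {0..k * ((p - 1) div D)}"
    by (meson card_image_le card_mono finite_atLeastAtMost finite_imageI order_trans)
  then show ?thesis by simp
qed

lemma twice_mul_le_pred_mul:
  fixes k p :: nat
  assumes "4 * k < p" and "p \<ge> 6"
  shows "2 * k * p \<le> (p - 1) * (p - 3)"
proof -
  have "4 * k * p \<le> (p - 1) * p"
    using assms(1) by simp
  also have "\<dots> \<le> (p - 1) * (2 * (p - 3))"
    using assms(2) by (intro mult_le_mono2) linarith
  finally show ?thesis by simp
qed

lemma twice_mul_div_less:
  fixes k p D :: nat
  assumes "2 * k * p \<le> D * (p - 3)" and "p > 3"
  shows "2 * k * ((p - 1) div D) < p - 3"
proof -
  define M where "M = (p - 1) div D"
  have "(2 * k * M) * p = M * (2 * k * p)" by simp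
  also have "\<dots> \<le> (M * D) * (p - 3)"
    using mult_le_mono2[OF assms(1), of M] by (simp add: mult.assoc)
  also have "\<dots> \<le> (p - 1) * (p - 3)"
    unfolding M_def by (intro mult_le_mono1 div_times_less_eq_dividend)
  also have "\<dots> < (p - 3) * p"
    using assms(2) by simp
  finally show ?thesis
    unfolding M_def by (meson mult_less_cancel2)
qed

lemma nat_ceiling_bounds:
  fixes x :: real and n :: nat
  assumes "0 \<le> x" and "x \<le> real n"
  shows "nat \<lceil>x\<rceil> \<le> n" and "x \<le> real (nat \<lceil>x\<rceil>)"
  using assms by (simp_all add: nat_le_iff ceiling_le_iff)

theorem lemma3p2:
  fixes p k D :: nat and A :: "nat \<Rightarrow> nat set"
  assumes "prime p" and "p > 5" and "k \<ge> 1" and "real k < real p / 4"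
    and "D = nat \<lceil>2 * real k * real p / (real p - 3)\<rceil>"
  shows "D < p \<and>
    ((\<forall>i\<in>{1..k}. is_D_AP p D (A i)) \<longrightarrow> 2 * card (sumset_mod p k A) \<le> p - 1)"
proof -
  have p3: "real p - 3 > 0" using assms(2) by simp
  have "2 * k * p \<le> (p - 1) * (p - 3)"
    using assms(2,4) by (intro twice_mul_le_pred_mul) linarith+
  then have "real (2 * k * p) \<le> real ((p - 1) * (p - 3))"
    by (simp only: of_nat_le_iff)
  then have "2 * real k * real p \<le> (real p - 1) * (real p - 3)"
    using assms(2) by (simp add: of_nat_diff)
  then have "2 * real k * real p / (real p - 3) \<le> real (p - 1)"
    using p3 assms(2) by (simp add: divide_le_eq of_nat_diff)
  with p3 have D_le: "D \<le> p - 1" and D_ge: "2 * real k * real p / (real p - 3) \<le> real D"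
    using nat_ceiling_bounds[of "2 * real k * real p / (real p - 3)" "p - 1"] assms(5) by auto
  have "2 * real k * real p \<le> real D * (real p - 3)"
    using D_ge p3 by (simp add: divide_le_eq)
  then have "real (2 * k * p) \<le> real (D * (p - 3))"
    using assms(2) by (simp add: of_nat_diff)
  then have "2 * k * p \<le> D * (p - 3)"
    by (simp only: of_nat_le_iff)
  then have "2 * k * ((p - 1) div D) < p - 3"
    using assms(2) by (intro twice_mul_div_less) auto
  then have "(\<forall>i\<in>{1..k}. is_D_AP p D (A i)) \<longrightarrow> 2 * card (sumset_mod p k A) \<le> p - 1"
    using card_sumset_mod_D_AP_le[of k p D A] by linarith
  with D_le assms(2) show ?thesis by simp
qed

end
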